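(* There is a unique mass distribution $(m_1',m_2',m_3')$ (positive, with $m_1'+m_2'+m_3'=1$) such that $m_1'\hat{\mathbf b}_1+m_2'\hat{\mathbf b}_2+m_3'\hat{\mathbf b}_3=0$, namely the dual masses $m_i'=\frac12(1-m_i)$.
   Context: Masses $m_1,m_2,m_3>0$, $m_1+m_2+m_3=1$. The shape sphere (oriented m-triangles $(\mathbf a_i)$, $\sum m_i\mathbf a_i=0$, with $\sum m_i|\mathbf a_i|^2=1$, modulo rotation, with the kinematic metric, a round sphere of radius $1/2$) is magnified by factor $2$ and identified isometrically with the unit sphere $S^2(1)\subset\mathbb R^3$ so that the equator of collinear shapes is the circle $x^2+y^2=1$, $z=0$ and positively oriented shapes have $z>0$. $\hat{\mathbf b}_1,\hat{\mathbf b}_2,\hat{\mathbf b}_3$ are the unit vectors representing the binary collision shapes $\mathbf a_2=\mathbf a_3$, $\mathbf a_3=\mathbf a_1$, $\mathbf a_1=\mathbf a_2$ respectively. *)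

theory Defs
  imports "HOL-Analysis.Analysis"
begin

definition normalized_config :: "real \<Rightarrow> real \<Rightarrow> real \<Rightarrow> complex \<Rightarrow> complex \<Rightarrow> complex \<Rightarrow> bool" where
  "normalized_config m1 m2 m3 a1 a2 a3 \<longleftrightarrow>
     of_real m1 * a1 + of_real m2 * a2 + of_real m3 * a3 = 0 \<and>
     m1 * (cmod a1)\<^sup>2 + m2 * (cmod a2)\<^sup>2 + m3 * (cmod a3)\<^sup>2 = 1"

text \<open>Mass-weighted Jacobi coordinates; for a normalized configuration
  (total mass 1) one has |u|^2 + |v|^2 = 1.\<close>

definition jac_u :: "real \<Rightarrow> real \<Rightarrow> real \<Rightarrow> complex \<Rightarrow> complex \<Rightarrow> complex \<Rightarrow> complex" where
  "jac_u m1 m2 m3 a1 a2 a3 = of_real (sqrt (m1 * m2 / (m1 + m2))) * (a2 - a1)"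

definition jac_v :: "real \<Rightarrow> real \<Rightarrow> real \<Rightarrow> complex \<Rightarrow> complex \<Rightarrow> complex \<Rightarrow> complex" where
  "jac_v m1 m2 m3 a1 a2 a3 =
     of_real (sqrt ((m1 + m2) * m3 / (m1 + m2 + m3))) *
     (a3 - (of_real m1 * a1 + of_real m2 * a2) / of_real (m1 + m2))"

text \<open>Shape map onto the unit sphere S^2(1) in R^3: the Hopf map of the
  Jacobi coordinates (the shape sphere S^2(1/2) magnified by 2).  It is rotation
  invariant, sends collinear shapes to the equator z = 0 and positively
  oriented triangles to z > 0.\<close>

definition shape_point :: "real \<Rightarrow> real \<Rightarrow> real \<Rightarrow> complex \<Rightarrow> complex \<Rightarrow> complex \<Rightarrow> real^3" where
  "shape_point m1 m2 m3 a1 a2 a3 =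
     (let u = jac_u m1 m2 m3 a1 a2 a3; v = jac_v m1 m2 m3 a1 a2 a3 in
      vector [(cmod u)\<^sup>2 - (cmod v)\<^sup>2, 2 * Re (cnj u * v), 2 * Im (cnj u * v)])"

definition binary_collision :: "nat \<Rightarrow> complex \<Rightarrow> complex \<Rightarrow> complex \<Rightarrow> bool" where
  "binary_collision i a1 a2 a3 \<longleftrightarrow>
     (i = 1 \<and> a2 = a3) \<or> (i = 2 \<and> a3 = a1) \<or> (i = 3 \<and> a1 = a2)"

definition bhat :: "real \<Rightarrow> real \<Rightarrow> real \<Rightarrow> nat \<Rightarrow> real^3" where
  "bhat m1 m2 m3 i = (THE p. \<exists>a1 a2 a3. normalized_config m1 m2 m3 a1 a2 a3 \<and>
       binary_collision i a1 a2 a3 \<and> p = shape_point m1 m2 m3 a1 a2 a3)"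

end

theory Submission
  imports Defs
begin

(* The Jacobi vectors u, v of a normalized configuration satisfy |u|^2 + |v|^2 = 1, by Jacobi's
   decomposition of the moment of inertia.  At a binary collision the configuration is collinear,
   so u and v are real multiples cu w, cv w of one complex number and the shape point is
   (cu^2 - cv^2, 2 cu cv, 0) / (cu^2 + cv^2); this gives the three collision points explicitly.
   Since m2 + m1 m3 = (m1 + m2)(1 - m1) and m1 + m2 m3 = (m1 + m2)(1 - m2), the second coordinate
   of p1 b1 + p2 b2 + p3 b3 = 0 says p1 / (1 - m1) = p2 / (1 - m2), the first coordinate says that
   p3 / (1 - m3) is the same ratio, and as the 1 - mi sum to 2 the normalization p1 + p2 + p3 = 1
   fixes that ratio to 1/2. *)

lemma cmod_power2_of_real_mult: "(cmod (of_real c * z))\<^sup>2 = c\<^sup>2 * (cmod z)\<^sup>2"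
  by (simp add: norm_mult power_mult_distrib)

lemma jacobi_decomposition_real:
  fixes m1 m2 m3 x y z :: real
  assumes "m1 + m2 \<noteq> 0" "m1 + m2 + m3 \<noteq> 0"
  shows "m1 * m2 / (m1 + m2) * (y - x)\<^sup>2
           + (m1 + m2) * m3 / (m1 + m2 + m3) * (z - (m1 * x + m2 * y) / (m1 + m2))\<^sup>2
           + (m1 * x + m2 * y + m3 * z)\<^sup>2 / (m1 + m2 + m3)
         = m1 * x\<^sup>2 + m2 * y\<^sup>2 + m3 * z\<^sup>2"
proof -
  have "z - (m1 * x + m2 * y) / (m1 + m2) = ((m1 + m2) * z - m1 * x - m2 * y) / (m1 + m2)"
    using assms by (simp add: field_simps)
  then show ?thesis
    using assms by (simp add: divide_simps power2_eq_square) algebra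
qed

lemma jacobi_moment_of_inertia:
  fixes m1 m2 m3 :: real
  assumes "m1 > 0" "m2 > 0" "m3 > 0"
  shows "(cmod (jac_u m1 m2 m3 a1 a2 a3))\<^sup>2 + (cmod (jac_v m1 m2 m3 a1 a2 a3))\<^sup>2
           + (cmod (of_real m1 * a1 + of_real m2 * a2 + of_real m3 * a3))\<^sup>2 / (m1 + m2 + m3)
         = m1 * (cmod a1)\<^sup>2 + m2 * (cmod a2)\<^sup>2 + m3 * (cmod a3)\<^sup>2"
proof -
  have "m1 + m2 \<noteq> 0" "m1 + m2 + m3 \<noteq> 0"
    using assms by auto
  note jacobi = jacobi_decomposition_real[OF this]
  have "(cmod (jac_u m1 m2 m3 a1 a2 a3))\<^sup>2 = m1 * m2 / (m1 + m2) * (cmod (a2 - a1))\<^sup>2"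
    using assms by (simp add: jac_u_def cmod_power2_of_real_mult)
  moreover have "(cmod (jac_v m1 m2 m3 a1 a2 a3))\<^sup>2 = (m1 + m2) * m3 / (m1 + m2 + m3)
      * (cmod (a3 - (of_real m1 * a1 + of_real m2 * a2) / of_real (m1 + m2)))\<^sup>2"
    using assms by (simp add: jac_v_def cmod_power2_of_real_mult del: of_real_add)
  moreover have "(cmod (a3 - (of_real m1 * a1 + of_real m2 * a2) / of_real (m1 + m2)))\<^sup>2
      = (Re a3 - (m1 * Re a1 + m2 * Re a2) / (m1 + m2))\<^sup>2
        + (Im a3 - (m1 * Im a1 + m2 * Im a2) / (m1 + m2))\<^sup>2"
    by (simp add: cmod_power2 del: of_real_add)
  moreover have "(cmod (of_real m1 * a1 + of_real m2 * a2 + of_real m3 * a3))\<^sup>2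
      = (m1 * Re a1 + m2 * Re a2 + m3 * Re a3)\<^sup>2 + (m1 * Im a1 + m2 * Im a2 + m3 * Im a3)\<^sup>2"
    by (simp add: cmod_power2)
  ultimately show ?thesis
    using jacobi[where x = "Re a1" and y = "Re a2" and z = "Re a3"]
      jacobi[where x = "Im a1" and y = "Im a2" and z = "Im a3"]
    by (simp add: cmod_power2 distrib_left add_divide_distrib)
qed

lemma normalized_config_jacobi_unit:
  assumes "m1 > 0" "m2 > 0" "m3 > 0" "m1 + m2 + m3 = 1"
    and "normalized_config m1 m2 m3 a1 a2 a3"
  shows "(cmod (jac_u m1 m2 m3 a1 a2 a3))\<^sup>2 + (cmod (jac_v m1 m2 m3 a1 a2 a3))\<^sup>2 = 1"
  using jacobi_moment_of_inertia[OF assms(1-3), of a1 a2 a3] assms(5)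
  unfolding normalized_config_def by simp

lemma jacobi_collinear:
  "jac_u m1 m2 m3 (of_real c1 * w) (of_real c2 * w) (of_real c3 * w)
     = of_real (sqrt (m1 * m2 / (m1 + m2)) * (c2 - c1)) * w"
  "jac_v m1 m2 m3 (of_real c1 * w) (of_real c2 * w) (of_real c3 * w)
     = of_real (sqrt ((m1 + m2) * m3 / (m1 + m2 + m3)) * (c3 - (m1 * c1 + m2 * c2) / (m1 + m2))) * w"
  unfolding jac_u_def jac_v_def by (simp_all add: algebra_simps add_divide_distrib)

lemma shape_point_aligned:
  assumes "jac_u m1 m2 m3 a1 a2 a3 = of_real cu * w" "jac_v m1 m2 m3 a1 a2 a3 = of_real cv * w"
    and "(cmod (jac_u m1 m2 m3 a1 a2 a3))\<^sup>2 + (cmod (jac_v m1 m2 m3 a1 a2 a3))\<^sup>2 = 1"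
  shows "shape_point m1 m2 m3 a1 a2 a3
           = vector [(cu\<^sup>2 - cv\<^sup>2) / (cu\<^sup>2 + cv\<^sup>2), 2 * cu * cv / (cu\<^sup>2 + cv\<^sup>2), 0]"
proof -
  have unit: "(cu\<^sup>2 + cv\<^sup>2) * (cmod w)\<^sup>2 = 1"
    using assms(3) unfolding assms(1,2) cmod_power2_of_real_mult by (simp add: distrib_right)
  then have "cu\<^sup>2 + cv\<^sup>2 \<noteq> 0"
    by auto
  with unit have w: "(cmod w)\<^sup>2 = 1 / (cu\<^sup>2 + cv\<^sup>2)"
    by (simp add: field_simps)
  have "cnj w * w = of_real ((cmod w)\<^sup>2)"
    by (metis complex_norm_square mult.commute)
  then have cross: "cnj (of_real cu * w) * (of_real cv * w) = of_real (cu * cv * (cmod w)\<^sup>2)"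
    by (simp add: mult_ac)
  show ?thesis
    unfolding shape_point_def Let_def assms(1,2) cmod_power2_of_real_mult cross w
    by (simp add: diff_divide_distrib mult.assoc)
qed

lemma shape_point_collinear:
  assumes m: "m1 > 0" "m2 > 0" "m3 > 0" "m1 + m2 + m3 = 1"
    and nc: "normalized_config m1 m2 m3 (of_real c1 * w) (of_real c2 * w) (of_real c3 * w)"
    and cu: "cu = sqrt (m1 * m2 / (m1 + m2)) * (c2 - c1)"
    and cv: "cv = sqrt ((m1 + m2) * m3) * (c3 - (m1 * c1 + m2 * c2) / (m1 + m2))"
  shows "shape_point m1 m2 m3 (of_real c1 * w) (of_real c2 * w) (of_real c3 * w)
           = vector [(cu\<^sup>2 - cv\<^sup>2) / (cu\<^sup>2 + cv\<^sup>2), 2 * cu * cv / (cu\<^sup>2 + cv\<^sup>2), 0]"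
  using shape_point_aligned[OF jacobi_collinear normalized_config_jacobi_unit[OF m nc]]
  unfolding cu cv m(4) by simp

lemma shape_vector_rescale:
  fixes cu cv k x y z :: real
  assumes "cu\<^sup>2 = k * x" "cv\<^sup>2 = k * y" "cu * cv = k * z" "k \<noteq> 0"
  shows "vector [(cu\<^sup>2 - cv\<^sup>2) / (cu\<^sup>2 + cv\<^sup>2), 2 * cu * cv / (cu\<^sup>2 + cv\<^sup>2), 0]
           = (vector [(x - y) / (x + y), 2 * z / (x + y), 0] :: real^3)"
proof -
  have "(cu\<^sup>2 - cv\<^sup>2) / (cu\<^sup>2 + cv\<^sup>2) = (k * (x - y)) / (k * (x + y))"
    "2 * cu * cv / (cu\<^sup>2 + cv\<^sup>2) = (k * (2 * z)) / (k * (x + y))"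
    unfolding assms(1,2) mult.assoc[of 2] assms(3) by (simp_all add: algebra_simps)
  then show ?thesis
    using assms(4) by simp
qed

lemma two_cluster_coordinates:
  fixes a b :: complex
  assumes "of_real m * a + of_real (1 - m) * b = 0"
  obtains w where "a = of_real (m - 1) * w" "b = of_real m * w"
proof
  have "b - of_real m * (b - a) = of_real m * a + of_real (1 - m) * b"
    by (simp add: algebra_simps)
  then show "b = of_real m * (b - a)"
    using assms by simp
  then show "a = of_real (m - 1) * (b - a)"
    by (simp add: algebra_simps)
qed

lemma shape_point_collision_1:
  assumes m: "m1 > 0" "m2 > 0" "m3 > 0" "m1 + m2 + m3 = 1"
    and nc: "normalized_config m1 m2 m3 a1 a2 a3" and "a2 = a3"
  shows "shape_point m1 m2 m3 a1 a2 a3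
           = vector [(m2 - m1 * m3) / (m2 + m1 * m3), 2 * sqrt (m1 * m2 * m3) / (m2 + m1 * m3), 0]"
proof -
  have "1 - m1 = m2 + m3"
    using m(4) by simp
  then have "of_real m1 * a1 + of_real (1 - m1) * a3 = 0"
    using nc \<open>a2 = a3\<close> unfolding normalized_config_def by (simp only:) (simp add: algebra_simps)
  then obtain w where a1: "a1 = of_real (m1 - 1) * w" and a3: "a3 = of_real m1 * w"
    by (rule two_cluster_coordinates)
  define cu where "cu = sqrt (m1 * m2 / (m1 + m2))"
  define cv where "cv = sqrt ((m1 + m2) * m3) * m1 / (m1 + m2)"
  have "shape_point m1 m2 m3 a1 a2 a3
          = vector [(cu\<^sup>2 - cv\<^sup>2) / (cu\<^sup>2 + cv\<^sup>2), 2 * cu * cv / (cu\<^sup>2 + cv\<^sup>2), 0]"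
    using nc unfolding \<open>a2 = a3\<close> a1 a3
  proof (rule shape_point_collinear[OF m])
    show "cu = sqrt (m1 * m2 / (m1 + m2)) * (m1 - (m1 - 1))"
      unfolding cu_def by simp
    show "cv = sqrt ((m1 + m2) * m3) * (m1 - (m1 * (m1 - 1) + m2 * m1) / (m1 + m2))"
      using m unfolding cv_def by (simp add: field_simps)
  qed
  also have "\<dots> = vector [(m2 - m1 * m3) / (m2 + m1 * m3), 2 * sqrt (m1 * m2 * m3) / (m2 + m1 * m3), 0]"
  proof (rule shape_vector_rescale)
    show "cu\<^sup>2 = m1 / (m1 + m2) * m2"
      using m unfolding cu_def by simp
    show "cv\<^sup>2 = m1 / (m1 + m2) * (m1 * m3)"
      using m unfolding cv_def
      by (simp add: power_divide power_mult_distrib) (simp add: power2_eq_square divide_simps)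
    show "cu * cv = m1 / (m1 + m2) * sqrt (m1 * m2 * m3)"
      using m unfolding cu_def cv_def by (simp add: real_sqrt_mult[symmetric] field_simps)
    show "m1 / (m1 + m2) \<noteq> 0"
      using m by simp
  qed
  finally show ?thesis .
qed

lemma shape_point_collision_2:
  assumes m: "m1 > 0" "m2 > 0" "m3 > 0" "m1 + m2 + m3 = 1"
    and nc: "normalized_config m1 m2 m3 a1 a2 a3" and "a3 = a1"
  shows "shape_point m1 m2 m3 a1 a2 a3
           = vector [(m1 - m2 * m3) / (m1 + m2 * m3), - 2 * sqrt (m1 * m2 * m3) / (m1 + m2 * m3), 0]"
proof -
  have "1 - m2 = m1 + m3"
    using m(4) by simp
  then have "of_real m2 * a2 + of_real (1 - m2) * a1 = 0"
    using nc \<open>a3 = a1\<close> unfolding normalized_config_def by (simp only:) (simp add: algebra_simps)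
  then obtain w where a2: "a2 = of_real (m2 - 1) * w" and a1: "a1 = of_real m2 * w"
    by (rule two_cluster_coordinates)
  define cu where "cu = - sqrt (m1 * m2 / (m1 + m2))"
  define cv where "cv = sqrt ((m1 + m2) * m3) * m2 / (m1 + m2)"
  have "shape_point m1 m2 m3 a1 a2 a3
          = vector [(cu\<^sup>2 - cv\<^sup>2) / (cu\<^sup>2 + cv\<^sup>2), 2 * cu * cv / (cu\<^sup>2 + cv\<^sup>2), 0]"
    using nc unfolding \<open>a3 = a1\<close> a1 a2
  proof (rule shape_point_collinear[OF m])
    show "cu = sqrt (m1 * m2 / (m1 + m2)) * ((m2 - 1) - m2)"
      unfolding cu_def by simp
    show "cv = sqrt ((m1 + m2) * m3) * (m2 - (m1 * m2 + m2 * (m2 - 1)) / (m1 + m2))"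
      using m unfolding cv_def by (simp add: field_simps)
  qed
  also have "\<dots> = vector [(m1 - m2 * m3) / (m1 + m2 * m3), 2 * - sqrt (m1 * m2 * m3) / (m1 + m2 * m3), 0]"
  proof (rule shape_vector_rescale)
    show "cu\<^sup>2 = m2 / (m1 + m2) * m1"
      using m unfolding cu_def by simp
    show "cv\<^sup>2 = m2 / (m1 + m2) * (m2 * m3)"
      using m unfolding cv_def
      by (simp add: power_divide power_mult_distrib) (simp add: power2_eq_square divide_simps)
    show "cu * cv = m2 / (m1 + m2) * - sqrt (m1 * m2 * m3)"
      using m unfolding cu_def cv_def by (simp add: real_sqrt_mult[symmetric] field_simps)
    show "m2 / (m1 + m2) \<noteq> 0"
      using m by simp
  qed
  finally show ?thesis
    by simp
qed

lemma shape_point_collision_3: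
  assumes m: "m1 > 0" "m2 > 0" "m3 > 0" "m1 + m2 + m3 = 1"
    and nc: "normalized_config m1 m2 m3 a1 a2 a3" and "a1 = a2"
  shows "shape_point m1 m2 m3 a1 a2 a3 = vector [-1, 0, 0]"
proof -
  have "1 - m3 = m1 + m2"
    using m(4) by simp
  then have "of_real m3 * a3 + of_real (1 - m3) * a1 = 0"
    using nc \<open>a1 = a2\<close> unfolding normalized_config_def by (simp only:) (simp add: algebra_simps)
  then obtain w where a3: "a3 = of_real (m3 - 1) * w" and a1: "a1 = of_real m3 * w"
    by (rule two_cluster_coordinates)
  define cv where "cv = - sqrt ((m1 + m2) * m3)"
  have "shape_point m1 m2 m3 a1 a2 a3
          = vector [(0\<^sup>2 - cv\<^sup>2) / (0\<^sup>2 + cv\<^sup>2), 2 * 0 * cv / (0\<^sup>2 + cv\<^sup>2), 0]"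
    using nc unfolding \<open>a1 = a2\<close>[symmetric] a1 a3
  proof (rule shape_point_collinear[OF m])
    show "0 = sqrt (m1 * m2 / (m1 + m2)) * (m3 - m3)"
      by simp
    show "cv = sqrt ((m1 + m2) * m3) * ((m3 - 1) - (m1 * m3 + m2 * m3) / (m1 + m2))"
      using m unfolding cv_def by (simp add: field_simps)
  qed
  also have "\<dots> = vector [-1, 0, 0]"
    using m unfolding cv_def by simp
  finally show ?thesis .
qed

lemma normalized_config_of_real:
  "normalized_config m1 m2 m3 (of_real x1) (of_real x2) (of_real x3) \<longleftrightarrow>
     m1 * x1 + m2 * x2 + m3 * x3 = 0 \<and> m1 * x1\<^sup>2 + m2 * x2\<^sup>2 + m3 * x3\<^sup>2 = 1"
  unfolding normalized_config_def
  by (simp flip: of_real_mult of_real_add del: of_real_mult of_real_add)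

lemma two_cluster_normalized:
  fixes m c :: real
  assumes "0 < m" "m < 1" "c = 1 / sqrt (m * (1 - m))"
  shows "m * ((m - 1) * c) + (1 - m) * (m * c) = 0"
    and "m * ((m - 1) * c)\<^sup>2 + (1 - m) * (m * c)\<^sup>2 = 1"
proof -
  show "m * ((m - 1) * c) + (1 - m) * (m * c) = 0"
    by (simp add: algebra_simps)
  have "m * ((m - 1) * c)\<^sup>2 + (1 - m) * (m * c)\<^sup>2 = m * (1 - m) * c\<^sup>2"
    by (simp add: power2_eq_square algebra_simps)
  also have "\<dots> = 1"
    using assms by (simp add: power_divide)
  finally show "m * ((m - 1) * c)\<^sup>2 + (1 - m) * (m * c)\<^sup>2 = 1" .
qed

lemma bhat_eqI:
  assumes "normalized_config m1 m2 m3 a1 a2 a3" "binary_collision i a1 a2 a3"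
    and "\<And>a1 a2 a3. normalized_config m1 m2 m3 a1 a2 a3 \<Longrightarrow> binary_collision i a1 a2 a3
           \<Longrightarrow> shape_point m1 m2 m3 a1 a2 a3 = p"
  shows "bhat m1 m2 m3 i = p"
  unfolding bhat_def using assms by (intro the_equality) blast+

lemma bhat_1:
  assumes m: "m1 > 0" "m2 > 0" "m3 > 0" "m1 + m2 + m3 = 1"
  shows "bhat m1 m2 m3 1
           = vector [(m2 - m1 * m3) / (m2 + m1 * m3), 2 * sqrt (m1 * m2 * m3) / (m2 + m1 * m3), 0]"
proof -
  define c where "c = 1 / sqrt (m1 * (1 - m1))"
  have cluster: "1 - m1 = m2 + m3" and "m1 < 1"
    using m by auto
  have rearrange: "m1 * x + m2 * y + m3 * y = m1 * x + (1 - m1) * y" for x y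
    unfolding cluster by (simp add: algebra_simps)
  have "normalized_config m1 m2 m3 (of_real ((m1 - 1) * c)) (of_real (m1 * c)) (of_real (m1 * c))"
    using two_cluster_normalized[OF m(1) \<open>m1 < 1\<close> c_def]
    unfolding normalized_config_of_real rearrange by simp
  then show ?thesis
    by (rule bhat_eqI) (auto simp: binary_collision_def shape_point_collision_1[OF m])
qed

lemma bhat_2:
  assumes m: "m1 > 0" "m2 > 0" "m3 > 0" "m1 + m2 + m3 = 1"
  shows "bhat m1 m2 m3 2
           = vector [(m1 - m2 * m3) / (m1 + m2 * m3), - 2 * sqrt (m1 * m2 * m3) / (m1 + m2 * m3), 0]"
proof -
  define c where "c = 1 / sqrt (m2 * (1 - m2))"
  have cluster: "1 - m2 = m1 + m3" and "m2 < 1"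
    using m by auto
  have rearrange: "m1 * y + m2 * x + m3 * y = m2 * x + (1 - m2) * y" for x y
    unfolding cluster by (simp add: algebra_simps)
  have "normalized_config m1 m2 m3 (of_real (m2 * c)) (of_real ((m2 - 1) * c)) (of_real (m2 * c))"
    using two_cluster_normalized[OF m(2) \<open>m2 < 1\<close> c_def]
    unfolding normalized_config_of_real rearrange by simp
  then show ?thesis
    by (rule bhat_eqI) (auto simp: binary_collision_def shape_point_collision_2[OF m])
qed

lemma bhat_3:
  assumes m: "m1 > 0" "m2 > 0" "m3 > 0" "m1 + m2 + m3 = 1"
  shows "bhat m1 m2 m3 3 = vector [-1, 0, 0]"
proof -
  define c where "c = 1 / sqrt (m3 * (1 - m3))"
  have cluster: "1 - m3 = m1 + m2" and "m3 < 1"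
    using m by auto
  have rearrange: "m1 * y + m2 * y + m3 * x = m3 * x + (1 - m3) * y" for x y
    unfolding cluster by (simp add: algebra_simps)
  have "normalized_config m1 m2 m3 (of_real (m3 * c)) (of_real (m3 * c)) (of_real ((m3 - 1) * c))"
    using two_cluster_normalized[OF m(3) \<open>m3 < 1\<close> c_def]
    unfolding normalized_config_of_real rearrange by simp
  then show ?thesis
    by (rule bhat_eqI) (auto simp: binary_collision_def shape_point_collision_3[OF m])
qed

lemma collision_shapes_balance_iff:
  fixes m1 m2 m3 p1 p2 p3 :: real
  assumes m: "m1 > 0" "m2 > 0" "m3 > 0" "m1 + m2 + m3 = 1"
  shows "p1 *\<^sub>R vector [(m2 - m1 * m3) / (m2 + m1 * m3), 2 * sqrt (m1 * m2 * m3) / (m2 + m1 * m3), 0]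
       + p2 *\<^sub>R vector [(m1 - m2 * m3) / (m1 + m2 * m3), - 2 * sqrt (m1 * m2 * m3) / (m1 + m2 * m3), 0]
       + p3 *\<^sub>R vector [-1, 0, 0] = (0 :: real^3)
     \<longleftrightarrow> (\<exists>t. p1 = t * (1 - m1) \<and> p2 = t * (1 - m2) \<and> p3 = t * (1 - m3))"
    (is "?balance \<longleftrightarrow> _")
proof -
  define A where "A = m1 + m2"
  have m3_eq: "m3 = 1 - A"
    using m(4) unfolding A_def by simp
  have pos: "A > 0" "1 - m1 > 0" "1 - m2 > 0" "sqrt (m1 * m2 * m3) > 0"
    using m unfolding A_def by auto
  have denominators: "m2 + m1 * m3 = A * (1 - m1)" "m1 + m2 * m3 = A * (1 - m2)"
    unfolding m3_eq A_def by (simp_all add: algebra_simps)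
  have numerators: "(m2 - m1 * m3) + (m1 - m2 * m3) = A * (1 - m3)"
    unfolding m3_eq A_def by (simp add: algebra_simps)
  have "?balance \<longleftrightarrow> p1 / (A * (1 - m1)) * (m2 - m1 * m3) + p2 / (A * (1 - m2)) * (m1 - m2 * m3) = p3
      \<and> 2 * sqrt (m1 * m2 * m3) * (p1 / (A * (1 - m1)) - p2 / (A * (1 - m2))) = 0"
    unfolding denominators by (simp add: vec_eq_iff forall_3 vector_3 algebra_simps)
  also have "\<dots> \<longleftrightarrow> p1 / (A * (1 - m1)) = p2 / (A * (1 - m2))
      \<and> p3 = p1 / (A * (1 - m1)) * (m2 - m1 * m3) + p2 / (A * (1 - m2)) * (m1 - m2 * m3)"
    using pos(4) by auto
  also have "\<dots> \<longleftrightarrow> (\<exists>t. p1 = t * (1 - m1) \<and> p2 = t * (1 - m2) \<and> p3 = t * (1 - m3))"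
  proof
    assume eqs: "p1 / (A * (1 - m1)) = p2 / (A * (1 - m2))
      \<and> p3 = p1 / (A * (1 - m1)) * (m2 - m1 * m3) + p2 / (A * (1 - m2)) * (m1 - m2 * m3)"
    define l where "l = p1 / (A * (1 - m1))"
    have l2: "p2 / (A * (1 - m2)) = l"
      using eqs unfolding l_def by simp
    have "p1 = A * l * (1 - m1)" "p2 = A * l * (1 - m2)"
      using pos l2 unfolding l_def by (simp_all add: field_simps)
    moreover have "p3 = A * l * (1 - m3)"
      using eqs l2 unfolding l_def[symmetric] by (simp add: numerators flip: distrib_left)
    ultimately show "\<exists>t. p1 = t * (1 - m1) \<and> p2 = t * (1 - m2) \<and> p3 = t * (1 - m3)"
      by blast
  next
    assume "\<exists>t. p1 = t * (1 - m1) \<and> p2 = t * (1 - m2) \<and> p3 = t * (1 - m3)"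
    then obtain t where p: "p1 = t * (1 - m1)" "p2 = t * (1 - m2)" "p3 = t * (1 - m3)"
      by blast
    then have "p1 / (A * (1 - m1)) = t / A" "p2 / (A * (1 - m2)) = t / A"
      using pos by simp_all
    moreover have "t / A * (m2 - m1 * m3) + t / A * (m1 - m2 * m3) = p3"
      unfolding distrib_left[symmetric] numerators p(3) using pos(1) by simp
    ultimately show "p1 / (A * (1 - m1)) = p2 / (A * (1 - m2))
      \<and> p3 = p1 / (A * (1 - m1)) * (m2 - m1 * m3) + p2 / (A * (1 - m2)) * (m1 - m2 * m3)"
      by simp
  qed
  finally show ?thesis .
qed

lemma dual_masses_iff:
  fixes m1 m2 m3 p1 p2 p3 :: real
  assumes m: "m1 > 0" "m2 > 0" "m3 > 0" "m1 + m2 + m3 = 1"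
  shows "(p1 > 0 \<and> p2 > 0 \<and> p3 > 0 \<and> p1 + p2 + p3 = 1
            \<and> (\<exists>t. p1 = t * (1 - m1) \<and> p2 = t * (1 - m2) \<and> p3 = t * (1 - m3)))
         \<longleftrightarrow> (p1 = (1 - m1) / 2 \<and> p2 = (1 - m2) / 2 \<and> p3 = (1 - m3) / 2)"
proof
  assume "p1 > 0 \<and> p2 > 0 \<and> p3 > 0 \<and> p1 + p2 + p3 = 1
            \<and> (\<exists>t. p1 = t * (1 - m1) \<and> p2 = t * (1 - m2) \<and> p3 = t * (1 - m3))"
  then obtain t where p: "p1 = t * (1 - m1)" "p2 = t * (1 - m2)" "p3 = t * (1 - m3)"
    and "p1 + p2 + p3 = 1"
    by blast
  then have "t * (3 - (m1 + m2 + m3)) = 1"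
    by (simp add: algebra_simps)
  then have "t = 1 / 2"
    using m(4) by simp
  then show "p1 = (1 - m1) / 2 \<and> p2 = (1 - m2) / 2 \<and> p3 = (1 - m3) / 2"
    using p by simp
next
  assume p: "p1 = (1 - m1) / 2 \<and> p2 = (1 - m2) / 2 \<and> p3 = (1 - m3) / 2"
  then have "\<exists>t. p1 = t * (1 - m1) \<and> p2 = t * (1 - m2) \<and> p3 = t * (1 - m3)"
    by (intro exI[of _ "1 / 2"]) simp
  moreover have "p1 > 0 \<and> p2 > 0 \<and> p3 > 0 \<and> p1 + p2 + p3 = 1"
    using m p by auto
  ultimately show "p1 > 0 \<and> p2 > 0 \<and> p3 > 0 \<and> p1 + p2 + p3 = 1
            \<and> (\<exists>t. p1 = t * (1 - m1) \<and> p2 = t * (1 - m2) \<and> p3 = t * (1 - m3))"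
    by blast
qed

theorem mainTheorem17:
  fixes m1 m2 m3 :: real
  assumes "m1 > 0" and "m2 > 0" and "m3 > 0" and "m1 + m2 + m3 = 1"
  shows "(\<exists>!mm :: real \<times> real \<times> real. (case mm of (p1, p2, p3) \<Rightarrow>
            p1 > 0 \<and> p2 > 0 \<and> p3 > 0 \<and> p1 + p2 + p3 = 1 \<and>
            p1 *\<^sub>R bhat m1 m2 m3 1 + p2 *\<^sub>R bhat m1 m2 m3 2 + p3 *\<^sub>R bhat m1 m2 m3 3 = 0)) \<and>
         (\<forall>p1 p2 p3. (p1 > 0 \<and> p2 > 0 \<and> p3 > 0 \<and> p1 + p2 + p3 = 1 \<and>
            p1 *\<^sub>R bhat m1 m2 m3 1 + p2 *\<^sub>R bhat m1 m2 m3 2 + p3 *\<^sub>R bhat m1 m2 m3 3 = 0)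
          \<longleftrightarrow> (p1 = (1 - m1) / 2 \<and> p2 = (1 - m2) / 2 \<and> p3 = (1 - m3) / 2))"
proof -
  have dual: "(p1 > 0 \<and> p2 > 0 \<and> p3 > 0 \<and> p1 + p2 + p3 = 1 \<and>
            p1 *\<^sub>R bhat m1 m2 m3 1 + p2 *\<^sub>R bhat m1 m2 m3 2 + p3 *\<^sub>R bhat m1 m2 m3 3 = 0)
          \<longleftrightarrow> (p1 = (1 - m1) / 2 \<and> p2 = (1 - m2) / 2 \<and> p3 = (1 - m3) / 2)" for p1 p2 p3
    unfolding bhat_1[OF assms] bhat_2[OF assms] bhat_3[OF assms]
      collision_shapes_balance_iff[OF assms] dual_masses_iff[OF assms] ..
  have "(case mm of (p1, p2, p3) \<Rightarrow>
            p1 > 0 \<and> p2 > 0 \<and> p3 > 0 \<and> p1 + p2 + p3 = 1 \<and>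
            p1 *\<^sub>R bhat m1 m2 m3 1 + p2 *\<^sub>R bhat m1 m2 m3 2 + p3 *\<^sub>R bhat m1 m2 m3 3 = 0)
          \<longleftrightarrow> mm = ((1 - m1) / 2, (1 - m2) / 2, (1 - m3) / 2)" for mm
    by (cases mm) (simp only: prod.case dual prod.inject)
  then show ?thesis
    unfolding dual by simp
qed

end
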